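(* Let $n\ge 2$ and let $\mu_0,\mu_1,\dots,\mu_n$ be the sequence of distributions obtained by applying a sequence of $n$ moves to an initial distribution $\mu_0$ with $\mu_0\{x\le 0\}\le n$ and $\mu_0\{x>0\}=0$. Then $\mu_n\{x>2n^{1/3}\log_2 n\}<1$.
   Context: A (discrete mass) distribution is a finite set $\mu=\{(x_1,m_1),\dots,(x_k,m_k)\}$ with $x_i\in\mathbb R$ and $m_i>0$; a signed distribution is the same without the positivity requirement. For $A\subseteq\mathbb R$, $\mu(A)=\sum_{x_i\in A}m_i$, and $\mu\{x>a\}$ means $\mu(\{x:x>a\})$, etc. Moments: $M_j[\mu]=\sum_i m_ix_i^j$. A move $v=([a,b],\delta)$ consists of an interval with $b-a=1$ and a signed distribution $\delta$ supported in $[a,b]$ with $M_0[\delta]=M_1[\delta]=0$; its center is $\frac{a+b}2$. It can be applied to $\mu$ if $\mu+\delta$ is a distribution, and then $v\mu=\mu+\delta$. A sequence of moves $v_1,\dots,v_\ell$ applied to $\mu_0$ produces $\mu_i=v_i\mu_{i-1}$. *)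

theory Defs
  imports Complex_Main
begin

text \<open>A (signed) discrete distribution is represented as a finitely supported
function from positions to masses: the point x carries mass f x.
The finite set of pairs (x_i, m_i) corresponds to the support with its masses.\<close>

definition supp :: "(real \<Rightarrow> real) \<Rightarrow> real set" where
  "supp f = {x. f x \<noteq> 0}"

definition signed_dist :: "(real \<Rightarrow> real) \<Rightarrow> bool" where
  "signed_dist f \<longleftrightarrow> finite (supp f)"

definition is_dist :: "(real \<Rightarrow> real) \<Rightarrow> bool" where
  "is_dist f \<longleftrightarrow> finite (supp f) \<and> (\<forall>x. f x \<ge> 0)"

definition mass :: "(real \<Rightarrow> real) \<Rightarrow> real set \<Rightarrow> real" where
  "mass f A = (\<Sum>x\<in>supp f \<inter> A. f x)"

definition moment :: "nat \<Rightarrow> (real \<Rightarrow> real) \<Rightarrow> real" where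
  "moment j f = (\<Sum>x\<in>supp f. f x * x ^ j)"

definition is_move :: "real \<Rightarrow> (real \<Rightarrow> real) \<Rightarrow> bool" where
  "is_move a \<delta> \<longleftrightarrow> signed_dist \<delta> \<and> supp \<delta> \<subseteq> {a..a+1}
     \<and> moment 0 \<delta> = 0 \<and> moment 1 \<delta> = 0"

definition move_sequence :: "nat \<Rightarrow> (nat \<Rightarrow> real \<Rightarrow> real) \<Rightarrow> (nat \<Rightarrow> real)
    \<Rightarrow> (nat \<Rightarrow> real \<Rightarrow> real) \<Rightarrow> bool" where
  "move_sequence n \<mu> a \<delta> \<longleftrightarrow> is_dist (\<mu> 0) \<and>
     (\<forall>i\<in>{1..n}. is_move (a i) (\<delta> i) \<and> is_dist (\<lambda>x. \<mu> (i-1) x + \<delta> i x)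
                 \<and> \<mu> i = (\<lambda>x. \<mu> (i-1) x + \<delta> i x))"

end

theory Submission
  imports Defs "HOL-Analysis.Convex"
begin

(* Measure a distribution mu by its excess  E_mu(s) = sum_x mu(x) (x - s)^+.  A move on
   [a, a+1] preserves mass and first moment, so it leaves E(s) unchanged for s outside (a, a+1];
   for the one point s of a lattice theta + Z inside (a, a+1] it can raise E(s) at most to the
   average E(s)/2 + (E(s-1) + E(s+1))/4.  Hence on every lattice theta + Z the excess is dominated
   by a deterministic "relaxation" process on Z that replaces one value at a time by this
   average, started from the ramp n (-(theta + j))^+.  Markov's inequality turns a bound on the
   excess at a point below R into a bound on the mass beyond R. *)

lemma sum_change:
  fixes h h' :: "'a \<Rightarrow> real"
  assumes "finite S" "U \<subseteq> S" "\<And>k. k \<in> S - U \<Longrightarrow> h' k = h k"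
  shows "sum h' S = sum h S + (\<Sum>k\<in>U. h' k - h k)"
proof -
  have "(\<Sum>k\<in>S. h' k - h k) = (\<Sum>k\<in>U. h' k - h k)"
    by (rule sum.mono_neutral_right) (use assms in auto)
  then show ?thesis by (simp add: sum_subtractf)
qed

(* A nonincreasing nonnegative sequence with x(i+1)^2 <= c x(i-1) x(i) decays like c^(k/3):
   the quantity x(i)^2 x(i-1) shrinks by the factor c at each step. *)
lemma cubic_decay:
  fixes x :: "nat \<Rightarrow> real" and c :: real
  assumes nonneg: "\<And>i. 0 \<le> x i" and dec: "\<And>i. x (Suc i) \<le> x i" and c: "0 \<le> c"
    and rec: "\<And>i. 1 \<le> i \<Longrightarrow> x (Suc i) ^ 2 \<le> c * (x (i - 1) * x i)"
    and k: "1 \<le> k"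
  shows "x k ^ 3 \<le> c ^ (k - 1) * (x 1 ^ 2 * x 0)"
proof -
  have w: "x i ^ 2 * x (i - 1) \<le> c ^ (i - 1) * (x 1 ^ 2 * x 0)" if "1 \<le> i" for i
    using that
  proof (induction i rule: dec_induct)
    case base then show ?case by simp
  next
    case (step i)
    have "x (Suc i) ^ 2 * x i \<le> c * (x (i - 1) * x i) * x i"
      by (rule mult_right_mono[OF rec[OF step(1)] nonneg])
    also have "\<dots> = c * (x i ^ 2 * x (i - 1))" by (simp add: power2_eq_square)
    also have "\<dots> \<le> c * (c ^ (i - 1) * (x 1 ^ 2 * x 0))" by (rule mult_left_mono[OF step(3) c])
    also have "\<dots> = c ^ (Suc i - 1) * (x 1 ^ 2 * x 0)" using step(1) by (cases i) simp_all
    finally show ?case by simp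
  qed
  have "x k \<le> x (k - 1)" using dec[of "k - 1"] k by simp
  then have "x k ^ 3 \<le> x k ^ 2 * x (k - 1)"
    by (simp add: power3_eq_cube power2_eq_square mult_left_mono nonneg)
  then show ?thesis using w[OF k] by linarith
qed

(* If D is controlled by X with ratio alpha/beta and by Y with ratio beta/alpha, then D is at most
   the geometric mean of X and Y, hence at most their arithmetic mean. *)
lemma balanced_bound:
  fixes \<alpha> \<beta> D X Y :: real
  assumes "0 \<le> \<alpha>" "0 \<le> \<beta>" "0 < \<alpha> + \<beta>" and right: "\<beta> * D \<le> \<alpha> * X" and left: "\<alpha> * D \<le> \<beta> * Y"
    and "0 \<le> X" "0 \<le> Y"
  shows "D \<le> (X + Y) / 2"
proof (cases "D \<le> 0")
  case True then show ?thesis using assms by simp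
next
  case False
  then have D: "0 < D" by simp
  have "0 < \<alpha>"
  proof (rule ccontr)
    assume "\<not> 0 < \<alpha>"
    then have "\<alpha> = 0" "0 < \<beta> * D" using assms D by auto
    then show False using right by simp
  qed
  have "0 < \<beta>"
  proof (rule ccontr)
    assume "\<not> 0 < \<beta>"
    then have "\<beta> = 0" "0 < \<alpha> * D" using assms D by auto
    then show False using left by simp
  qed
  have "(\<alpha> * \<beta>) * D\<^sup>2 = (\<beta> * D) * (\<alpha> * D)" by (simp add: power2_eq_square)
  also have "\<dots> \<le> (\<alpha> * X) * (\<beta> * Y)"
  proof (rule mult_mono[OF right left])
    show "0 \<le> \<alpha> * X" using assms(6) \<open>0 < \<alpha>\<close> by simp
    show "0 \<le> \<alpha> * D" using D \<open>0 < \<alpha>\<close> by simp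
  qed
  also have "\<dots> = (\<alpha> * \<beta>) * (X * Y)" by simp
  finally have "D\<^sup>2 \<le> X * Y" using \<open>0 < \<alpha>\<close> \<open>0 < \<beta>\<close> by simp
  also have "X * Y \<le> ((X + Y) / 2)\<^sup>2"
  proof -
    have "((X + Y) / 2)\<^sup>2 - X * Y = ((X - Y) / 2)\<^sup>2" by (simp add: power2_eq_square algebra_simps)
    then show ?thesis by (metis diff_ge_0_iff_ge zero_le_power2)
  qed
  finally show ?thesis by (rule power2_le_imp_le) (use assms in simp)
qed

section \<open>The lattice relaxation process\<close>

definition relax :: "int \<Rightarrow> (int \<Rightarrow> real) \<Rightarrow> int \<Rightarrow> real" where
  "relax i f = f(i := f i / 2 + (f (i - 1) + f (i + 1)) / 4)"

fun relax_seq :: "(int \<Rightarrow> real) \<Rightarrow> (nat \<Rightarrow> int) \<Rightarrow> nat \<Rightarrow> int \<Rightarrow> real" where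
  "relax_seq P0 \<sigma> 0 = P0"
| "relax_seq P0 \<sigma> (Suc t) = relax (\<sigma> t) (relax_seq P0 \<sigma> t)"

definition profile :: "real \<Rightarrow> (int \<Rightarrow> real) \<Rightarrow> bool" where
  "profile L f \<longleftrightarrow> (\<forall>j. 0 \<le> f j \<and> f j \<le> f (j - 1) \<and> f (j - 1) - f j \<le> L
                      \<and> f j - f (j + 1) \<le> f (j - 1) - f j)"

lemma profileD:
  assumes "profile L f"
  shows "0 \<le> f j" "f j \<le> f (j - 1)" "f (j - 1) - f j \<le> L" "f j - f (j + 1) \<le> f (j - 1) - f j"
  using assms unfolding profile_def by blast+

(* Relaxing a site keeps a profile a profile; only the conditions at i-1, i, i+1 are affected. *)
lemma profile_relax:
  assumes f: "profile L f"
  shows "profile L (relax i f)"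
  unfolding profile_def
proof
  fix j
  define v where "v = f i / 2 + (f (i - 1) + f (i + 1)) / 4"
  have F: "relax i f k = (if k = i then v else f k)" for k
    by (simp add: relax_def v_def)
  have left: "0 \<le> f (i - 1)" "f (i - 1) \<le> f (i - 2)" "f (i - 2) - f (i - 1) \<le> L"
    "f (i - 1) - f i \<le> f (i - 2) - f (i - 1)"
    using profileD[OF f, of "i - 1"] by (simp_all add: algebra_simps)
  have mid: "0 \<le> f i" "f i \<le> f (i - 1)" "f (i - 1) - f i \<le> L" "f i - f (i + 1) \<le> f (i - 1) - f i"
    using profileD[OF f, of i] by simp_all
  have right: "0 \<le> f (i + 1)" "f (i + 1) \<le> f i" "f i - f (i + 1) \<le> L"
    "f (i + 1) - f (i + 2) \<le> f i - f (i + 1)"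
    using profileD[OF f, of "i + 1"] by (simp_all add: algebra_simps)
  consider "j = i - 1" | "j = i" | "j = i + 1" | "j \<notin> {i - 1, i, i + 1}" by blast
  then show "0 \<le> relax i f j \<and> relax i f j \<le> relax i f (j - 1) \<and> relax i f (j - 1) - relax i f j \<le> L
      \<and> relax i f j - relax i f (j + 1) \<le> relax i f (j - 1) - relax i f j"
  proof cases
    case 1
    then have "relax i f j = f (i - 1)" "relax i f (j - 1) = f (i - 2)" "relax i f (j + 1) = v"
      by (simp_all add: F)
    then show ?thesis using left mid right unfolding v_def by argo
  next
    case 2
    then have "relax i f j = v" "relax i f (j - 1) = f (i - 1)" "relax i f (j + 1) = f (i + 1)"
      by (simp_all add: F)
    then show ?thesis using left mid right unfolding v_def by argo
  next
    case 3
    then have "relax i f j = f (i + 1)" "relax i f (j - 1) = v" "relax i f (j + 1) = f (i + 2)"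
      by (simp_all add: F add.commute)
    then show ?thesis using left mid right unfolding v_def by argo
  next
    case 4 then show ?thesis using profileD[OF f, of j] by (simp add: F)
  qed
qed

locale relaxation =
  fixes P0 :: "int \<Rightarrow> real" and \<sigma> :: "nat \<Rightarrow> int" and L :: real
  assumes profile_init: "profile L P0"
    and init_vanishes: "\<And>j. 0 \<le> j \<Longrightarrow> P0 j = 0"
begin

abbreviation P :: "nat \<Rightarrow> int \<Rightarrow> real" where "P \<equiv> relax_seq P0 \<sigma>"

definition gap :: "nat \<Rightarrow> int \<Rightarrow> real" where "gap t j = P t (j - 1) - P t j"

definition gain :: "nat \<Rightarrow> real" where "gain t = P (Suc t) (\<sigma> t) - P t (\<sigma> t)"

lemma profile_P: "profile L (P t)"
  by (induction t) (simp_all add: profile_init profile_relax)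

lemma P_nonneg: "0 \<le> P t j"
  using profileD(1)[OF profile_P] .

lemma gap_nonneg: "0 \<le> gap t j"
  using profileD(2)[OF profile_P] unfolding gap_def by simp

lemma gap_le: "gap t j \<le> L"
  using profileD(3)[OF profile_P] unfolding gap_def by simp

lemma gap_Suc_le: "gap t (j + 1) \<le> gap t j"
  using profileD(4)[OF profile_P, of t j] unfolding gap_def by simp

lemma gap_antimono: "i \<le> j \<Longrightarrow> gap t j \<le> gap t i"
proof (induction j rule: int_ge_induct)
  case (step j) then show ?case using gap_Suc_le[of t j] by linarith
qed simp

lemma P_telescope: "P t j = P t (j + int d) + (\<Sum>r<d. gap t (j + int r + 1))"
  by (induction d) (simp_all add: gap_def algebra_simps)

lemma P_antimono: "i \<le> j \<Longrightarrow> P t j \<le> P t i"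
  using P_telescope[of t i "nat (j - i)"] gap_nonneg by (simp add: sum_nonneg)

lemma slope_bound: "P t j \<le> P t (j + int d) + L * real d"
proof -
  have "(\<Sum>r<d. gap t (j + int r + 1)) \<le> (\<Sum>r<d. L)" by (rule sum_mono) (rule gap_le)
  then show ?thesis using P_telescope[of t j d] by (simp add: mult.commute)
qed

lemma P_step: "P (Suc t) j = P t j + (if j = \<sigma> t then gain t else 0)"
  by (simp add: gain_def relax_def)

lemma gain_eq: "gain t = (gap t (\<sigma> t) - gap t (\<sigma> t + 1)) / 4"
  by (simp add: gain_def gap_def relax_def algebra_simps)

lemma gain_nonneg: "0 \<le> gain t"
  using gap_Suc_le[of t "\<sigma> t"] by (simp add: gain_eq)

lemma gain_le: "gain t \<le> gap t (\<sigma> t) / 4"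
  using gap_nonneg[of t "\<sigma> t + 1"] by (simp add: gain_eq)

lemma gap_step:
  "gap (Suc t) j = gap t j - (if j = \<sigma> t then gain t else 0) + (if j = \<sigma> t + 1 then gain t else 0)"
  unfolding gap_def P_step by auto

lemma P_mono: "t \<le> t' \<Longrightarrow> P t j \<le> P t' j"
proof (induction t' rule: dec_induct)
  case (step t') then show ?case using P_step[of t' j] gain_nonneg[of t'] by auto
qed simp

(* Mass spreads by at most one site per step, so P t vanishes on sites j >= t. *)
lemma P_vanishes: "int t \<le> j \<Longrightarrow> P t j = 0"
proof (induction t arbitrary: j)
  case 0 then show ?case by (simp add: init_vanishes)
next
  case (Suc t)
  then have "P t (j - 1) = 0" "P t j = 0" "P t (j + 1) = 0" by simp_all
  then show ?case by (cases "j = \<sigma> t") (simp_all add: relax_def)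
qed

lemma gap_vanishes: "int t + 1 \<le> j \<Longrightarrow> gap t j = 0"
  unfolding gap_def using P_vanishes[of t j] P_vanishes[of t "j - 1"] by simp

lemma gain_vanishes: "int t + 1 \<le> \<sigma> t \<Longrightarrow> gain t = 0"
  unfolding gain_eq using gap_vanishes[of t "\<sigma> t"] gap_vanishes[of t "\<sigma> t + 1"] by simp

end

subsection \<open>Exponential decay\<close>

context relaxation
begin

(* Exponentially weighted slopes; each relaxation increases this potential by at most a quarter
   of itself plus L/2, which yields exponential decay of P in the site index. *)
definition weighted_gap :: "nat \<Rightarrow> nat \<Rightarrow> real" where
  "weighted_gap M t = (\<Sum>k=1..M. 2 ^ k * gap t (int k))"

lemma weighted_gap_ge: "k \<in> {1..M} \<Longrightarrow> 2 ^ k * gap t (int k) \<le> weighted_gap M t"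
  unfolding weighted_gap_def by (rule member_le_sum) (simp_all add: gap_nonneg)

lemma weighted_gap_nonneg: "0 \<le> weighted_gap M t"
  unfolding weighted_gap_def by (simp add: sum_nonneg gap_nonneg)

lemma weighted_gap_step:
  assumes "t < M"
  shows "weighted_gap M (Suc t) \<le> 5/4 * weighted_gap M t + L/2"
proof -
  define i where "i = \<sigma> t"
  have L: "0 \<le> L" using gap_nonneg[of t 0] gap_le[of t 0] by linarith
  have W: "0 \<le> weighted_gap M t" by (rule weighted_gap_nonneg)
  have change: "weighted_gap M (Suc t) = weighted_gap M t + (\<Sum>k\<in>U. 2 ^ k * (gap (Suc t) (int k) - gap t (int k)))"
    if "U \<subseteq> {1..M}" "\<And>k. k \<in> {1..M} - U \<Longrightarrow> gap (Suc t) (int k) = gap t (int k)" for U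
    unfolding weighted_gap_def
    by (subst sum_change[where U = U]) (use that in \<open>simp_all add: right_diff_distrib\<close>)
  consider "i < 0 \<or> int M \<le> i" | "i = 0" | "1 \<le> i \<and> i < int M" by linarith
  then show ?thesis
  proof cases
    case 1
    then have "gain t = 0 \<or> i < 0" using gain_vanishes[of t] assms i_def by linarith
    then have "weighted_gap M (Suc t) = weighted_gap M t"
      using change[of "{}"] by (auto simp: gap_step i_def)
    then show ?thesis using W L by simp
  next
    case 2
    then have "weighted_gap M (Suc t) = weighted_gap M t + 2 * gain t"
      using change[of "{1}"] assms by (simp add: gap_step i_def)
    moreover have "gain t \<le> L / 4" using gain_le[of t] gap_le[of t "\<sigma> t"] by simp
    ultimately show ?thesis using W by simp
  next
    case 3
    define k where "k = nat i"
    have k: "i = int k" "1 \<le> k" "k + 1 \<le> M" using 3 k_def by auto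
    have "weighted_gap M (Suc t) = weighted_gap M t + 2 ^ k * gain t"
      using change[of "{k, k + 1}"] k by (simp add: gap_step i_def algebra_simps)
    moreover have "2 ^ k * gain t \<le> 2 ^ k * gap t (int k) / 4"
      using gain_le[of t] k by (simp add: i_def)
    moreover have "2 ^ k * gap t (int k) \<le> weighted_gap M t"
      using weighted_gap_ge[of k M t] k by simp
    ultimately show ?thesis using L by linarith
  qed
qed

lemma weighted_gap_bound: "t \<le> M \<Longrightarrow> weighted_gap M t \<le> 2 * L * ((5/4) ^ t - 1)"
proof (induction t)
  case 0 then show ?case by (simp add: weighted_gap_def gap_vanishes)
next
  case (Suc t)
  then have "weighted_gap M (Suc t) \<le> 5/4 * weighted_gap M t + L/2"
    by (intro weighted_gap_step) simp
  also have "\<dots> \<le> 5/4 * (2 * L * ((5/4) ^ t - 1)) + L/2" using Suc by simp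
  also have "\<dots> = 2 * L * ((5/4) ^ Suc t - 1)" by (simp add: algebra_simps)
  finally show ?case .
qed

lemma decay_bound: "P N (int T) \<le> 2 * L * (5/4) ^ N / 2 ^ T"
proof -
  define W where "W = weighted_gap (T + N) N"
  have geometric: "(\<Sum>r<N. (1/2::real) ^ (r + 1)) = 1 - (1/2) ^ N"
    by (induction N) simp_all
  have "P N (int T) = (\<Sum>r<N. gap N (int T + int r + 1))"
    using P_telescope[of N "int T" N] P_vanishes[of N "int T + int N"] by simp
  also have "\<dots> \<le> (\<Sum>r<N. W * (1/2) ^ (T + r + 1))"
  proof (rule sum_mono)
    fix r assume "r \<in> {..<N}"
    then have "2 ^ (T + r + 1) * gap N (int (T + r + 1)) \<le> W"
      unfolding W_def by (intro weighted_gap_ge) simp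
    then show "gap N (int T + int r + 1) \<le> W * (1/2) ^ (T + r + 1)"
      by (simp add: field_simps power_one_over)
  qed
  also have "\<dots> = W * (1/2) ^ T * (\<Sum>r<N. (1/2) ^ (r + 1))"
    by (simp add: sum_distrib_left power_add mult_ac)
  also have "\<dots> = W * (1/2) ^ T * (1 - (1/2) ^ N)"
    using geometric by simp
  also have "\<dots> \<le> W * (1/2) ^ T"
    using weighted_gap_nonneg[of "T + N" N] by (simp add: W_def mult_left_le)
  also have "\<dots> \<le> 2 * L * (5/4) ^ N * (1/2) ^ T"
  proof (rule mult_right_mono)
    have "0 \<le> L" using gap_nonneg[of 0 0] gap_le[of 0 0] by linarith
    then show "W \<le> 2 * L * (5/4) ^ N"
      using weighted_gap_bound[of N "T + N"] by (simp add: W_def right_diff_distrib)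
  qed simp
  also have "\<dots> = 2 * L * (5/4) ^ N / 2 ^ T" by (simp add: power_one_over)
  finally show ?thesis .
qed

end

subsection \<open>Cubic decay along blocks\<close>

context relaxation
begin

(* The squared slopes to the right of m, plus six times the squared gains
   accumulated strictly inside (m, M), grow by at most 2 Gamma per unit increase of P at m, where
   Gamma bounds the slope at m + 1. *)
definition gap_energy :: "nat \<Rightarrow> nat \<Rightarrow> nat \<Rightarrow> real" where
  "gap_energy M m t = (\<Sum>k\<in>{m+1..M}. (gap t (int k))\<^sup>2)"

definition dissipation :: "nat \<Rightarrow> nat \<Rightarrow> nat \<Rightarrow> real" where
  "dissipation M m t = (\<Sum>u<t. if int m + 1 \<le> \<sigma> u \<and> \<sigma> u < int M then (gain u)\<^sup>2 else 0)"

lemma gap_energy_step: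
  assumes t: "t < M" and m: "m + 1 \<le> M"
  shows "gap_energy M m (Suc t) = gap_energy M m t
    + (if \<sigma> t = int m then (gap t (int m + 1) + gain t)\<^sup>2 - (gap t (int m + 1))\<^sup>2
       else if int m + 1 \<le> \<sigma> t \<and> \<sigma> t < int M then - 6 * (gain t)\<^sup>2 else 0)"
proof -
  define i where "i = \<sigma> t"
  have change: "gap_energy M m (Suc t)
      = gap_energy M m t + (\<Sum>k\<in>U. (gap (Suc t) (int k))\<^sup>2 - (gap t (int k))\<^sup>2)"
    if "U \<subseteq> {m+1..M}" "\<And>k. k \<in> {m+1..M} - U \<Longrightarrow> gap (Suc t) (int k) = gap t (int k)" for U
    unfolding gap_energy_def by (rule sum_change) (use that in auto)
  consider "i < int m \<or> int M \<le> i" | "i = int m" | "int m + 1 \<le> i \<and> i < int M" by linarith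
  then show ?thesis
  proof cases
    case 1
    then have "gain t = 0 \<or> i < int m" using gain_vanishes[of t] t by (auto simp: i_def)
    then have "gap_energy M m (Suc t) = gap_energy M m t"
      using change[of "{}"] by (auto simp: gap_step i_def)
    then show ?thesis using 1 m by (auto simp: i_def)
  next
    case 2
    then show ?thesis
      using change[of "{m + 1}"] m by (simp add: gap_step i_def add.commute)
  next
    case 3
    define k where "k = nat i"
    have k: "i = int k" "m + 1 \<le> k" "k + 1 \<le> M" using 3 k_def by auto
    define g where "g = gap t (int k + 1)"
    have gk: "gap t (int k) = g + 4 * gain t" using k gain_eq[of t] by (simp add: g_def i_def)
    have "gap_energy M m (Suc t) = gap_energy M m t
        + (((g + 4 * gain t) - gain t)\<^sup>2 - (g + 4 * gain t)\<^sup>2) + ((g + gain t)\<^sup>2 - g\<^sup>2)"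
      using change[of "{k, k + 1}"] k gk by (simp add: gap_step i_def g_def add.commute)
    also have "\<dots> = gap_energy M m t - 6 * (gain t)\<^sup>2" by (simp add: power2_eq_square algebra_simps)
    finally show ?thesis using 3 by (simp add: i_def)
  qed
qed

lemma energy_step:
  assumes t: "t < M" and m: "m + 1 \<le> M" and \<Gamma>: "gap (Suc t) (int m + 1) \<le> \<Gamma>"
  shows "gap_energy M m (Suc t) + 6 * dissipation M m (Suc t)
      \<le> gap_energy M m t + 6 * dissipation M m t + 2 * \<Gamma> * (P (Suc t) (int m) - P t (int m))"
proof -
  have D: "dissipation M m (Suc t)
      = dissipation M m t + (if int m + 1 \<le> \<sigma> t \<and> \<sigma> t < int M then (gain t)\<^sup>2 else 0)"
    by (simp add: dissipation_def)
  have Pm: "P (Suc t) (int m) - P t (int m) = (if \<sigma> t = int m then gain t else 0)"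
    using P_step[of t "int m"] by auto
  show ?thesis
  proof (cases "\<sigma> t = int m")
    case True
    define y where "y = gap t (int m + 1)"
    have "gap (Suc t) (int m + 1) = y + gain t" using True by (simp add: gap_step y_def)
    then have "y + gain t \<le> \<Gamma>" using \<Gamma> by simp
    then have "gain t * (2 * y + gain t) \<le> gain t * (2 * \<Gamma>)"
      using gap_nonneg[of t "int m + 1"] gain_nonneg[of t] unfolding y_def by (intro mult_left_mono) auto
    then have "(y + gain t)\<^sup>2 - y\<^sup>2 \<le> 2 * \<Gamma> * gain t" by (simp add: power2_eq_square algebra_simps)
    then show ?thesis using gap_energy_step[OF t m] True D Pm by (simp add: y_def)
  next
    case False
    then show ?thesis using gap_energy_step[OF t m] D Pm by simp
  qed
qed

lemma energy_bound:
  assumes N: "N < M" and m: "m + 1 \<le> M" and \<Gamma>: "\<And>u. u \<le> N \<Longrightarrow> gap u (int m + 1) \<le> \<Gamma>"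
  shows "gap_energy M m N + 6 * dissipation M m N \<le> 2 * \<Gamma> * P N (int m)"
proof -
  have "gap_energy M m t + 6 * dissipation M m t \<le> 2 * \<Gamma> * P t (int m)" if "t \<le> N" for t
    using that
  proof (induction t)
    case 0 then show ?case
      by (simp add: gap_energy_def dissipation_def gap_vanishes init_vanishes)
  next
    case (Suc t)
    then have "gap_energy M m (Suc t) + 6 * dissipation M m (Suc t)
        \<le> gap_energy M m t + 6 * dissipation M m t + 2 * \<Gamma> * (P (Suc t) (int m) - P t (int m))"
      using N m \<Gamma> by (intro energy_step) auto
    then show ?case using Suc by (simp add: algebra_simps)
  qed
  then show ?thesis by simp
qed

lemma flux:
  assumes "0 \<le> lo"
  shows "(\<Sum>j\<in>{lo..hi}. P t j) = (\<Sum>u<t. if \<sigma> u \<in> {lo..hi} then gain u else 0)"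
proof (induction t)
  case 0 then show ?case using assms by (simp add: init_vanishes)
next
  case (Suc t)
  have "(\<Sum>j\<in>{lo..hi}. P (Suc t) j)
      = (\<Sum>j\<in>{lo..hi}. P t j) + (\<Sum>j\<in>{lo..hi}. if j = \<sigma> t then gain t else 0)"
    by (simp only: P_step sum.distrib)
  then show ?case using Suc by simp
qed

(* Combining flux, Cauchy-Schwarz over the N steps and the energy bound: the value at distance d
   to the right of m is controlled by the value at m and the slope bound Gamma at m + 1. *)
lemma chain_step:
  assumes d: "1 \<le> d" and \<Gamma>: "\<And>u. u \<le> N \<Longrightarrow> gap u (int m + 1) \<le> \<Gamma>"
  shows "(real d * P N (int (m + d)))\<^sup>2 \<le> real N * (\<Gamma> * P N (int m) / 3)"
proof -
  define M where "M = N + m + d + 1"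
  define x where "x u = (if \<sigma> u \<in> {int m + 1..int (m + d)} then gain u else 0)" for u
  have "real d * P N (int (m + d)) = (\<Sum>j\<in>{int m + 1..int (m + d)}. P N (int (m + d)))"
    by simp
  also have "\<dots> \<le> (\<Sum>j\<in>{int m + 1..int (m + d)}. P N j)"
    by (rule sum_mono) (simp add: P_antimono)
  also have "\<dots> = (\<Sum>u<N. x u)" unfolding x_def by (rule flux) simp
  finally have mass: "real d * P N (int (m + d)) \<le> (\<Sum>u<N. x u)" .
  have "(\<Sum>u<N. (x u)\<^sup>2) \<le> dissipation M m N"
    unfolding dissipation_def x_def by (rule sum_mono) (auto simp: M_def)
  also have "dissipation M m N \<le> \<Gamma> * P N (int m) / 3"
    using energy_bound[of N M m \<Gamma>] \<Gamma> sum_nonneg[of "{m+1..M}" "\<lambda>k. (gap N (int k))\<^sup>2"]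
    by (simp add: M_def gap_energy_def)
  finally have "real N * (\<Sum>u<N. (x u)\<^sup>2) \<le> real N * (\<Gamma> * P N (int m) / 3)"
    by (rule mult_left_mono) simp
  then have "(\<Sum>u<N. x u)\<^sup>2 \<le> real N * (\<Gamma> * P N (int m) / 3)"
    using sum_squared_le_sum_of_squares[of x "{..<N}"] by (simp add: mult.commute)
  moreover have "(real d * P N (int (m + d)))\<^sup>2 \<le> (\<Sum>u<N. x u)\<^sup>2"
    using mass P_nonneg[of N "int (m + d)"] by (intro power_mono) auto
  ultimately show ?thesis by linarith
qed

lemma gap_bound:
  assumes K: "1 \<le> K" and u: "u \<le> N"
  shows "gap u (j + 1) \<le> P N (j + 1 - int K) / real K"
proof -
  have "real K * gap u (j + 1) = (\<Sum>r<K. gap u (j + 1))" by simp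
  also have "\<dots> \<le> (\<Sum>r<K. gap u ((j + 1 - int K) + int r + 1))"
    by (rule sum_mono) (rule gap_antimono, simp)
  also have "\<dots> = P u (j + 1 - int K) - P u (j + 1)"
    using P_telescope[of u "j + 1 - int K" K] by simp
  also have "\<dots> \<le> P N (j + 1 - int K)"
    using P_nonneg[of u "j + 1"] P_mono[OF u, of "j + 1 - int K"] by linarith
  finally show ?thesis using K by (simp add: field_simps)
qed

lemma chain_decay:
  assumes d: "1 \<le> d" and k: "1 \<le> k"
  shows "(P N (int (k * d)))^3 \<le> (real N / (3 * real d ^ 3)) ^ (k - 1) * ((P N (int d))\<^sup>2 * P N 0)"
proof -
  define x where "x i = P N (int (i * d))" for i
  have "x k ^ 3 \<le> (real N / (3 * real d ^ 3)) ^ (k - 1) * (x 1 ^ 2 * x 0)"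
  proof (rule cubic_decay)
    fix i :: nat assume i: "1 \<le> i"
    have \<Gamma>: "gap u (int (i * d) + 1) \<le> x (i - 1) / real d" if "u \<le> N" for u
    proof -
      have "gap u (int (i * d) + 1) \<le> P N (int (i * d) + 1 - int d) / real d"
        by (rule gap_bound) (use d that in auto)
      also have "\<dots> \<le> x (i - 1) / real d"
        unfolding x_def using i
        by (intro divide_right_mono P_antimono) (simp_all add: of_nat_diff diff_mult_distrib)
      finally show ?thesis .
    qed
    have "(real d * x (Suc i))\<^sup>2 \<le> real N * (x (i - 1) / real d * x i / 3)"
      using chain_step[OF d \<Gamma>] by (simp add: x_def add.commute)
    then show "x (Suc i) ^ 2 \<le> real N / (3 * real d ^ 3) * (x (i - 1) * x i)"
      using d by (simp add: power_mult_distrib field_simps power3_eq_cube power2_eq_square)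
  qed (use k in \<open>simp_all add: x_def P_nonneg P_antimono\<close>)
  then show ?thesis by (simp add: x_def)
qed

end

(* The initial profile: the excess of n units of mass at the origin, sampled on theta + Z. *)
definition ramp :: "real \<Rightarrow> real \<Rightarrow> int \<Rightarrow> real" where
  "ramp L \<theta> j = L * max 0 (- (\<theta> + of_int j))"

lemma relaxation_ramp:
  assumes L: "0 \<le> L" and \<theta>: "0 \<le> \<theta>"
  shows "relaxation (ramp L \<theta>) L"
proof
  show "profile L (ramp L \<theta>)"
    unfolding profile_def
  proof
    fix j
    define y where "y = - (\<theta> + of_int j)"
    have shift: "- (\<theta> + of_int (j - 1)) = y + 1" "- (\<theta> + of_int (j + 1)) = y - 1"
      by (simp_all add: y_def)
    have "ramp L \<theta> (j - 1) = L * max 0 (y + 1)" "ramp L \<theta> j = L * max 0 y"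
      "ramp L \<theta> (j + 1) = L * max 0 (y - 1)"
      unfolding ramp_def shift y_def[symmetric] by simp_all
    moreover have "0 \<le> L * max 0 y" "0 \<le> L * (max 0 (y + 1) - max 0 y)"
      "L * (max 0 (y + 1) - max 0 y) \<le> L"
      "0 \<le> L * ((max 0 (y + 1) - max 0 y) - (max 0 y - max 0 (y - 1)))"
      using L by (auto intro!: mult_nonneg_nonneg mult_left_le simp: max_def)
    ultimately show "0 \<le> ramp L \<theta> j \<and> ramp L \<theta> j \<le> ramp L \<theta> (j - 1)
        \<and> ramp L \<theta> (j - 1) - ramp L \<theta> j \<le> L
        \<and> ramp L \<theta> j - ramp L \<theta> (j + 1) \<le> ramp L \<theta> (j - 1) - ramp L \<theta> j"
      by (simp only: right_diff_distrib) (safe; linarith)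
  qed
  show "ramp L \<theta> j = 0" if "0 \<le> j" for j using that \<theta> by (simp add: ramp_def)
qed

section \<open>Distributions, moves and the excess potential\<close>

definition msum :: "(real \<Rightarrow> real) \<Rightarrow> (real \<Rightarrow> real) \<Rightarrow> real" where
  "msum f h = (\<Sum>x\<in>supp f. f x * h x)"

lemma msum_superset:
  assumes "finite S" "supp f \<subseteq> S"
  shows "msum f h = (\<Sum>x\<in>S. f x * h x)"
  unfolding msum_def by (rule sum.mono_neutral_left) (use assms in \<open>auto simp: supp_def\<close>)

lemma msum_le:
  assumes "finite (supp f)" "finite (supp g)" "\<And>x. f x * h x \<le> g x * k x"
  shows "msum f h \<le> msum g k"
proof -
  have "msum f h = (\<Sum>x\<in>supp f \<union> supp g. f x * h x)" by (rule msum_superset) (use assms in auto)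
  also have "\<dots> \<le> (\<Sum>x\<in>supp f \<union> supp g. g x * k x)" by (rule sum_mono) (rule assms(3))
  also have "\<dots> = msum g k" by (rule msum_superset[symmetric]) (use assms in auto)
  finally show ?thesis .
qed

lemma msum_add:
  assumes "finite (supp f)" "finite (supp g)"
  shows "msum (\<lambda>x. f x + g x) h = msum f h + msum g h"
proof -
  define S where "S = supp f \<union> supp g"
  have S: "finite S" "supp f \<subseteq> S" "supp g \<subseteq> S" "supp (\<lambda>x. f x + g x) \<subseteq> S"
    using assms by (auto simp: S_def supp_def)
  show ?thesis
    unfolding msum_superset[OF S(1,2)] msum_superset[OF S(1,3)] msum_superset[OF S(1,4)]
    by (simp add: sum.distrib algebra_simps)
qed

lemma msum_add_fun: "msum f (\<lambda>x. h x + k x) = msum f h + msum f k"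
  unfolding msum_def by (simp add: distrib_left sum.distrib)

lemma msum_scale: "msum f (\<lambda>x. c * h x) = c * msum f h"
  unfolding msum_def by (simp add: sum_distrib_left mult_ac)

lemma msum_cong: "(\<And>x. f x \<noteq> 0 \<Longrightarrow> h x = k x) \<Longrightarrow> msum f h = msum f k"
  unfolding msum_def supp_def by (rule sum.cong) auto

lemma move_msum_affine:
  assumes "is_move a \<delta>"
  shows "msum \<delta> (\<lambda>x. c + e * x) = 0"
proof -
  have "(\<Sum>x\<in>supp \<delta>. \<delta> x) = 0" "(\<Sum>x\<in>supp \<delta>. \<delta> x * x) = 0"
    using assms unfolding is_move_def moment_def by simp_all
  moreover have "msum \<delta> (\<lambda>x. c + e * x) = c * (\<Sum>x\<in>supp \<delta>. \<delta> x) + e * (\<Sum>x\<in>supp \<delta>. \<delta> x * x)"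
    unfolding msum_def by (simp add: sum_distrib_left sum.distrib algebra_simps)
  ultimately show ?thesis by simp
qed

lemma move_supported: "is_move a \<delta> \<Longrightarrow> \<delta> x \<noteq> 0 \<Longrightarrow> a \<le> x \<and> x \<le> a + 1"
  unfolding is_move_def supp_def by auto

(* Outside the interval of the move the kink (x - r)^+ is affine on [a, a+1]. *)
lemma move_kink_vanishes:
  assumes mv: "is_move a \<delta>" and r: "r \<le> a \<or> a + 1 < r"
  shows "msum \<delta> (\<lambda>x. max 0 (x - r)) = 0"
proof -
  have "msum \<delta> (\<lambda>x. max 0 (x - r)) = msum \<delta> (\<lambda>x. (if r \<le> a then - r else 0) + (if r \<le> a then 1 else 0) * x)"
    by (rule msum_cong) (use move_supported[OF mv] r in force)
  also have "\<dots> = 0" by (rule move_msum_affine[OF mv])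
  finally show ?thesis .
qed

definition excess :: "(real \<Rightarrow> real) \<Rightarrow> real \<Rightarrow> real" where
  "excess f s = msum f (\<lambda>x. max 0 (x - s))"

lemma excess_add:
  assumes "finite (supp f)" "finite (supp g)"
  shows "excess (\<lambda>x. f x + g x) s = excess f s + msum g (\<lambda>x. max 0 (x - s))"
  unfolding excess_def by (rule msum_add[OF assms])

lemma move_outside:
  assumes "is_dist \<mu>" "is_move a \<delta>" "s \<le> a \<or> a + 1 < s"
  shows "excess (\<lambda>x. \<mu> x + \<delta> x) s = excess \<mu> s"
  using assms excess_add[of \<mu> \<delta> s] move_kink_vanishes[of a \<delta> s]
  by (simp add: is_dist_def is_move_def signed_dist_def)

lemma move_kink_reflect:
  assumes mv: "is_move a \<delta>"
  shows "msum \<delta> (\<lambda>x. max 0 (x - s)) = msum \<delta> (\<lambda>x. max 0 (s - x))"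
proof -
  have "msum \<delta> (\<lambda>x. max 0 (x - s)) = msum \<delta> (\<lambda>x. max 0 (s - x) + (- s + 1 * x))"
    by (rule msum_cong) (auto simp: max_def)
  then show ?thesis using move_msum_affine[OF mv, of "- s" 1] by (simp only: msum_add_fun)
qed

(* Mass moved by delta is dominated by the new distribution: delta <= mu + delta, and delta
   lives on [a, a+1]. *)
lemma move_dominated:
  assumes mu: "is_dist \<mu>" and nu: "is_dist (\<lambda>x. \<mu> x + \<delta> x)" and mv: "is_move a \<delta>"
    and le: "\<And>x. a \<le> x \<Longrightarrow> x \<le> a + 1 \<Longrightarrow> k x \<le> w x" and k: "\<And>x. 0 \<le> k x" and w: "\<And>x. 0 \<le> w x"
  shows "msum \<delta> k \<le> msum (\<lambda>x. \<mu> x + \<delta> x) w"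
proof (rule msum_le)
  show "finite (supp \<delta>)" "finite (supp (\<lambda>x. \<mu> x + \<delta> x))"
    using mv nu unfolding is_move_def signed_dist_def is_dist_def by auto
  fix x
  have nu0: "0 \<le> \<mu> x + \<delta> x" and mu0: "0 \<le> \<mu> x" using mu nu unfolding is_dist_def by auto
  show "\<delta> x * k x \<le> (\<mu> x + \<delta> x) * w x"
  proof (cases "\<delta> x = 0")
    case True then show ?thesis using nu0 w[of x] by simp
  next
    case False
    have "\<delta> x * k x \<le> (\<mu> x + \<delta> x) * k x" using mu0 k[of x] by (intro mult_right_mono) auto
    also have "\<dots> \<le> (\<mu> x + \<delta> x) * w x"
      using le move_supported[OF mv False] nu0 by (intro mult_left_mono) auto
    finally show ?thesis .
  qed
qed

(* Key estimate: the increase of the excess at s in (a, a+1] is at most half of the second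
   difference of the new excess at s.  Both one-sided forms of the increase are paid for by the
   new mass on the two halves of the tent (1 - |x - s|)^+, with weights that balance exactly. *)
lemma move_gain:
  assumes mu: "is_dist \<mu>" and nu: "is_dist (\<lambda>x. \<mu> x + \<delta> x)" and mv: "is_move a \<delta>"
    and s: "a < s" "s \<le> a + 1"
  shows "2 * msum \<delta> (\<lambda>x. max 0 (x - s))
    \<le> excess (\<lambda>x. \<mu> x + \<delta> x) (s - 1) - 2 * excess (\<lambda>x. \<mu> x + \<delta> x) s + excess (\<lambda>x. \<mu> x + \<delta> x) (s + 1)"
proof -
  define \<nu> where "\<nu> = (\<lambda>x. \<mu> x + \<delta> x)"
  define \<alpha> where "\<alpha> = a + 1 - s"
  define \<beta> where "\<beta> = s - a"
  define D where "D = msum \<delta> (\<lambda>x. max 0 (x - s))"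
  define tR where "tR x = (if s < x \<and> x \<le> a + 1 then 1 - (x - s) else 0)" for x
  define tL where "tL x = (if a \<le> x \<and> x < s then 1 - (s - x) else 0)" for x
  have tR0: "0 \<le> tR x" and tL0: "0 \<le> tL x" for x using s by (auto simp: tR_def tL_def)
  have nu0: "0 \<le> \<nu> x" for x using nu unfolding is_dist_def \<nu>_def by auto
  have right: "\<beta> * D \<le> \<alpha> * msum \<nu> tR"
  proof -
    have "msum \<delta> (\<lambda>x. \<beta> * max 0 (x - s)) \<le> msum \<nu> (\<lambda>x. \<alpha> * tR x)"
      unfolding \<nu>_def
    proof (rule move_dominated[OF mu nu mv])
      fix x assume "a \<le> x" "x \<le> a + 1"
      moreover have "\<beta> * (x - s) - \<alpha> * (1 - (x - s)) = (x - s) - \<alpha>" by (simp add: \<alpha>_def \<beta>_def algebra_simps)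
      ultimately show "\<beta> * max 0 (x - s) \<le> \<alpha> * tR x" using s by (auto simp: tR_def \<alpha>_def \<beta>_def)
    qed (use s tR0 in \<open>simp_all add: \<alpha>_def \<beta>_def\<close>)
    then show ?thesis by (simp add: msum_scale D_def)
  qed
  have left: "\<alpha> * D \<le> \<beta> * msum \<nu> tL"
  proof -
    have "msum \<delta> (\<lambda>x. \<alpha> * max 0 (s - x)) \<le> msum \<nu> (\<lambda>x. \<beta> * tL x)"
      unfolding \<nu>_def
    proof (rule move_dominated[OF mu nu mv])
      fix x assume "a \<le> x" "x \<le> a + 1"
      moreover have "\<alpha> * (s - x) - \<beta> * (1 - (s - x)) = (s - x) - \<beta>" by (simp add: \<alpha>_def \<beta>_def algebra_simps)
      ultimately show "\<alpha> * max 0 (s - x) \<le> \<beta> * tL x" using s by (auto simp: tL_def \<alpha>_def \<beta>_def)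
    qed (use s tL0 in \<open>simp_all add: \<alpha>_def \<beta>_def\<close>)
    then show ?thesis by (simp add: msum_scale D_def move_kink_reflect[OF mv])
  qed
  have tent: "msum \<nu> tR + msum \<nu> tL \<le> excess \<nu> (s - 1) - 2 * excess \<nu> s + excess \<nu> (s + 1)"
  proof -
    have fin: "finite (supp \<nu>)" using nu unfolding is_dist_def \<nu>_def by auto
    have "msum \<nu> tR + msum \<nu> tL \<le> msum \<nu> (\<lambda>x. max 0 (x - (s - 1)) - 2 * max 0 (x - s) + max 0 (x - (s + 1)))"
      unfolding msum_add_fun[symmetric]
      by (rule msum_le[OF fin fin], rule mult_left_mono) (auto simp: tR_def tL_def max_def nu0)
    also have "\<dots> = excess \<nu> (s - 1) - 2 * excess \<nu> s + excess \<nu> (s + 1)"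
      unfolding excess_def msum_def by (simp add: sum.distrib sum_subtractf sum_distrib_left algebra_simps)
    finally show ?thesis .
  qed
  have "D \<le> (msum \<nu> tR + msum \<nu> tL) / 2"
    by (rule balanced_bound[OF _ _ _ right left])
      (use s nu0 tR0 tL0 in \<open>simp_all add: \<alpha>_def \<beta>_def msum_def sum_nonneg\<close>)
  then show ?thesis using tent unfolding D_def \<nu>_def by simp
qed

lemma move_step:
  assumes mu: "is_dist \<mu>" and nu: "is_dist (\<lambda>x. \<mu> x + \<delta> x)" and mv: "is_move a \<delta>"
    and s: "a < s" "s \<le> a + 1"
  shows "excess (\<lambda>x. \<mu> x + \<delta> x) s \<le> excess \<mu> s / 2 + (excess \<mu> (s - 1) + excess \<mu> (s + 1)) / 4"
proof -
  have "excess (\<lambda>x. \<mu> x + \<delta> x) (s - 1) = excess \<mu> (s - 1)"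
    "excess (\<lambda>x. \<mu> x + \<delta> x) (s + 1) = excess \<mu> (s + 1)"
    using move_outside[OF mu mv] s by simp_all
  moreover have "excess (\<lambda>x. \<mu> x + \<delta> x) s = excess \<mu> s + msum \<delta> (\<lambda>x. max 0 (x - s))"
    using mu mv by (intro excess_add) (simp_all add: is_dist_def is_move_def signed_dist_def)
  ultimately show ?thesis using move_gain[OF mu nu mv s] by argo
qed

lemma mass_le_excess:
  assumes f: "is_dist f" and sR: "s < R"
  shows "mass f {R<..} \<le> excess f s / (R - s)"
proof -
  have fin: "finite (supp f)" and nn: "\<And>x. 0 \<le> f x" using f unfolding is_dist_def by auto
  have "(R - s) * mass f {R<..} = (\<Sum>x\<in>supp f \<inter> {R<..}. f x * (R - s))"
    unfolding mass_def by (simp add: sum_distrib_left mult.commute)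
  also have "\<dots> \<le> (\<Sum>x\<in>supp f \<inter> {R<..}. f x * max 0 (x - s))"
    by (rule sum_mono) (use nn in \<open>auto intro: mult_left_mono\<close>)
  also have "\<dots> \<le> excess f s"
    unfolding excess_def msum_def by (rule sum_mono2) (use fin nn in auto)
  finally show ?thesis using sR by (simp add: field_simps mult.commute)
qed

lemma excess_initial:
  assumes f: "is_dist f" and right: "mass f {0<..} = 0" and left: "mass f {..0} \<le> L"
  shows "excess f s \<le> L * max 0 (- s)"
proof -
  have fin: "finite (supp f)" and nn: "\<And>x. 0 \<le> f x" using f unfolding is_dist_def by auto
  have "supp f \<inter> {0<..} = {}"
  proof (rule ccontr)
    assume "supp f \<inter> {0<..} \<noteq> {}"
    moreover have "\<And>x. x \<in> supp f \<Longrightarrow> 0 < f x" using nn unfolding supp_def by (simp add: order_less_le)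
    ultimately have "0 < mass f {0<..}" unfolding mass_def by (intro sum_pos) (use fin in auto)
    then show False using right by simp
  qed
  then have sub: "supp f \<subseteq> {..0}" by auto
  have "excess f s \<le> (\<Sum>x\<in>supp f. f x * max 0 (- s))"
    unfolding excess_def msum_def
    by (rule sum_mono) (use sub nn in \<open>auto intro!: mult_left_mono\<close>)
  also have "\<dots> = max 0 (- s) * mass f {..0}"
    unfolding mass_def using sub by (simp add: sum_distrib_right Int_absorb2 mult.commute)
  also have "\<dots> \<le> max 0 (- s) * L" using left by (simp add: mult_left_mono)
  finally show ?thesis by (simp add: mult.commute)
qed

lemma move_sequence_step:
  assumes "move_sequence N \<mu> a \<delta>" "t < N"
  shows "is_move (a (Suc t)) (\<delta> (Suc t))" "is_dist (\<lambda>x. \<mu> t x + \<delta> (Suc t) x)"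
    "\<mu> (Suc t) = (\<lambda>x. \<mu> t x + \<delta> (Suc t) x)"
proof -
  have "Suc t \<in> {1..N}" using assms(2) by simp
  then have "is_move (a (Suc t)) (\<delta> (Suc t)) \<and> is_dist (\<lambda>x. \<mu> (Suc t - 1) x + \<delta> (Suc t) x)
      \<and> \<mu> (Suc t) = (\<lambda>x. \<mu> (Suc t - 1) x + \<delta> (Suc t) x)"
    using assms(1) unfolding move_sequence_def by blast
  then show "is_move (a (Suc t)) (\<delta> (Suc t))" "is_dist (\<lambda>x. \<mu> t x + \<delta> (Suc t) x)"
    "\<mu> (Suc t) = (\<lambda>x. \<mu> t x + \<delta> (Suc t) x)"
    by simp_all
qed

lemma move_sequence_dist:
  assumes "move_sequence N \<mu> a \<delta>" "t \<le> N"
  shows "is_dist (\<mu> t)"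
proof (cases t)
  case 0 then show ?thesis using assms unfolding move_sequence_def by simp
next
  case (Suc u) then show ?thesis using move_sequence_step[OF assms(1), of u] assms(2) by simp
qed

definition site :: "real \<Rightarrow> (nat \<Rightarrow> real) \<Rightarrow> nat \<Rightarrow> int" where
  "site \<theta> a u = \<lfloor>a (Suc u) - \<theta>\<rfloor> + 1"

lemma site_bounds: "a (Suc u) < \<theta> + of_int (site \<theta> a u)" "\<theta> + of_int (site \<theta> a u) \<le> a (Suc u) + 1"
  unfolding site_def by linarith+

lemma excess_le_relaxation:
  assumes ms: "move_sequence N \<mu> a \<delta>" and init: "\<And>s. excess (\<mu> 0) s \<le> L * max 0 (- s)"
  shows "t \<le> N \<Longrightarrow> excess (\<mu> t) (\<theta> + of_int j) \<le> relax_seq (ramp L \<theta>) (site \<theta> a) t j"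
proof (induction t arbitrary: j)
  case 0 then show ?case using init[of "\<theta> + of_int j"] by (simp add: ramp_def)
next
  case (Suc t)
  define P where "P = relax_seq (ramp L \<theta>) (site \<theta> a) t"
  define i where "i = site \<theta> a t"
  have IH: "excess (\<mu> t) (\<theta> + of_int k) \<le> P k" for k using Suc by (simp add: P_def)
  have t: "t < N" using Suc.prems by simp
  note mv = move_sequence_step[OF ms t] and mu = move_sequence_dist[OF ms less_imp_le[OF t]]
  have "excess (\<mu> (Suc t)) (\<theta> + of_int j) \<le> relax i P j"
  proof (cases "j = i")
    case True
    have "excess (\<mu> (Suc t)) (\<theta> + of_int j)
        \<le> excess (\<mu> t) (\<theta> + of_int i) / 2
          + (excess (\<mu> t) (\<theta> + of_int i - 1) + excess (\<mu> t) (\<theta> + of_int i + 1)) / 4"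
      unfolding mv(3) True i_def using move_step[OF mu mv(2) mv(1) site_bounds[where a = a and u = t and \<theta> = \<theta>]] by simp
    also have "\<dots> \<le> P i / 2 + (P (i - 1) + P (i + 1)) / 4"
      using IH[of i] IH[of "i - 1"] IH[of "i + 1"] by (simp add: algebra_simps) argo
    finally show ?thesis using True by (simp add: relax_def)
  next
    case False
    then have "\<theta> + of_int j \<le> a (Suc t) \<or> a (Suc t) + 1 < \<theta> + of_int j"
      using site_bounds[where a = a and u = t and \<theta> = \<theta>] unfolding i_def[symmetric] by (cases "j < i") simp_all
    then have "excess (\<mu> (Suc t)) (\<theta> + of_int j) = excess (\<mu> t) (\<theta> + of_int j)"
      unfolding mv(3) using move_outside[OF mu mv(1)] t by simp
    then show ?thesis using IH[of j] False by (simp add: relax_def)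
  qed
  then show ?case by (simp add: P_def i_def)
qed

lemma tail_bound:
  assumes ms: "move_sequence N \<mu> a \<delta>" and init: "\<And>s. excess (\<mu> 0) s \<le> L * max 0 (- s)"
    and R: "\<theta> + of_int j < R"
  shows "mass (\<mu> N) {R<..} \<le> relax_seq (ramp L \<theta>) (site \<theta> a) N j / (R - (\<theta> + of_int j))"
proof -
  have "mass (\<mu> N) {R<..} \<le> excess (\<mu> N) (\<theta> + of_int j) / (R - (\<theta> + of_int j))"
    by (rule mass_le_excess[OF move_sequence_dist[OF ms] R]) simp
  also have "\<dots> \<le> relax_seq (ramp L \<theta>) (site \<theta> a) N j / (R - (\<theta> + of_int j))"
    using excess_le_relaxation[OF ms init, of N \<theta> j] R by (simp add: divide_right_mono)
  finally show ?thesis .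
qed

section \<open>Numerical estimates and the three regimes\<close>

lemma cbrt_cube: "0 \<le> x \<Longrightarrow> (x powr (1/3)) ^ 3 = (x::real)"
  using root_powr_inverse[of 3 x] real_root_pow_pos2[of 3 x] by simp

lemma cbrt_lower:
  assumes "0 \<le> r" "r ^ 3 \<le> (x::real)"
  shows "r \<le> x powr (1/3)"
proof (rule ccontr)
  assume "\<not> r \<le> x powr (1/3)"
  then have "(x powr (1/3)) ^ 3 < r ^ 3" by (intro power_strict_mono) auto
  moreover have "0 \<le> x" using assms by (meson order.trans zero_le_power)
  ultimately show False using cbrt_cube assms by simp
qed

lemma log2_lower:
  assumes "0 < x" "0 < q" "(2::real) ^ p \<le> x ^ q"
  shows "real p / real q \<le> log 2 x"
proof -
  have "real p \<le> log 2 (x ^ q)" by (rule le_log_of_power) (use assms in auto)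
  also have "\<dots> = real q * log 2 x" using assms(1) by (simp add: log_nat_power)
  finally show ?thesis using assms(2) by (simp add: field_simps)
qed

lemma log2_upper:
  assumes "0 < x" "0 < q" "x ^ q \<le> (2::real) ^ p"
  shows "log 2 x \<le> real p / real q"
proof -
  have "real q * log 2 x = log 2 (x ^ q)" using assms(1) by (simp add: log_nat_power)
  also have "\<dots> \<le> log 2 (2 ^ p)" using assms by (subst log_le_cancel_iff) auto
  also have "\<dots> = real p" by (simp add: log_nat_power)
  finally show ?thesis using assms(2) by (simp add: field_simps)
qed

lemma radius_lower:
  assumes "0 < n" "c ^ 3 \<le> n * 10^6" "(2::nat) ^ p \<le> n ^ 10"
  shows "real (2 * c * p) / 1000 \<le> 2 * real n powr (1/3) * log 2 (real n)"
proof -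
  have "real c / 100 \<le> real n powr (1/3)"
    by (rule cbrt_lower) (use of_nat_mono[OF assms(2)] in \<open>simp_all add: power_divide\<close>)
  moreover have "real p / real (10::nat) \<le> log 2 (real n)"
    by (rule log2_lower) (use assms of_nat_mono[OF assms(3)] in simp_all)
  ultimately have "2 * (real c / 100) * (real p / 10) \<le> 2 * real n powr (1/3) * log 2 (real n)"
    by (intro mult_mono) simp_all
  then show ?thesis by simp
qed

lemma radius_small:
  assumes "2 \<le> n" "n \<le> 4"
  shows "real n + 1/2 \<le> 2 * real n powr (1/3) * log 2 (real n)"
proof -
  consider "n = 2" | "n = 3" | "n = 4" using assms by linarith
  then show ?thesis
  proof cases
    case 1 then show ?thesis using radius_lower[of n 125 10] by (simp add: mult_ac)
  next
    case 2 then show ?thesis using radius_lower[of n 144 15] by (simp add: mult_ac)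
  next
    case 3 then show ?thesis using radius_lower[of n 158 20] by (simp add: mult_ac)
  qed
qed

lemma decay_certificate:
  assumes "n1 \<le> n" "n \<le> n2" "0 < n1" "c ^ 3 \<le> n1 * 10^6" "(2::nat) ^ p \<le> n1 ^ 10"
    "(T + 1) * 1000 \<le> 2 * c * p" "2 * n2 * 5 ^ n2 < 4 ^ n2 * (2::nat) ^ T"
  shows "2 * real n * (5/4) ^ n / 2 ^ nat \<lfloor>2 * real n powr (1/3) * log 2 (real n) - 1\<rfloor> < 1"
proof -
  define R where "R = 2 * real n powr (1/3) * log 2 (real n)"
  have "c ^ 3 \<le> n * 10^6" "(2::nat) ^ p \<le> n ^ 10"
    using assms(1,4,5) order.trans[OF assms(5) power_mono[OF assms(1)]] by (auto intro: le_trans)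
  then have "real (2 * c * p) / 1000 \<le> R" unfolding R_def by (intro radius_lower) (use assms in auto)
  moreover have "real (T + 1) \<le> real (2 * c * p) / 1000"
    using assms(6) of_nat_le_iff[of "(T + 1) * 1000" "2 * c * p", where 'a = real] by simp
  ultimately have T: "T \<le> nat \<lfloor>R - 1\<rfloor>" by linarith
  have "2 * real n * (5/4) ^ n \<le> 2 * real n2 * (5/4) ^ n2"
    using assms(2) by (intro mult_mono power_increasing) auto
  also have "\<dots> < 2 ^ T"
    using assms(7) of_nat_less_iff[of "2 * n2 * 5 ^ n2" "4 ^ n2 * 2 ^ T", where 'a = real]
    by (simp add: power_divide field_simps)
  also have "\<dots> \<le> 2 ^ nat \<lfloor>R - 1\<rfloor>" using T by (intro power_increasing) auto
  finally show ?thesis unfolding R_def by simp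
qed

lemma radius_mid:
  assumes "5 \<le> n" "n \<le> 307"
  shows "2 * real n * (5/4) ^ n / 2 ^ nat \<lfloor>2 * real n powr (1/3) * log 2 (real n) - 1\<rfloor> < 1"
proof -
  consider "n \<le> 6" | "7 \<le> n \<and> n \<le> 13" | "14 \<le> n \<and> n \<le> 33" | "34 \<le> n \<and> n \<le> 73"
    | "74 \<le> n \<and> n \<le> 130" | "131 \<le> n \<and> n \<le> 187" | "188 \<le> n \<and> n \<le> 233"
    | "234 \<le> n \<and> n \<le> 266" | "267 \<le> n \<and> n \<le> 285" | "286 \<le> n \<and> n \<le> 297"
    | "298 \<le> n \<and> n \<le> 306" | "n = 307" using assms by linarith
  then show ?thesis
  proof cases
    case 1 show ?thesis by (rule decay_certificate[of 5 n 6 170 23 6]) (use assms 1 in simp_all)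
  next
    case 2 show ?thesis by (rule decay_certificate[of 7 n 13 191 28 9]) (use 2 in simp_all)
  next
    case 3 show ?thesis by (rule decay_certificate[of 14 n 33 241 38 17]) (use 3 in simp_all)
  next
    case 4 show ?thesis by (rule decay_certificate[of 34 n 73 323 50 31]) (use 4 in simp_all)
  next
    case 5 show ?thesis by (rule decay_certificate[of 74 n 130 419 62 50]) (use 5 in simp_all)
  next
    case 6 show ?thesis by (rule decay_certificate[of 131 n 187 507 70 69]) (use 6 in simp_all)
  next
    case 7 show ?thesis by (rule decay_certificate[of 188 n 233 572 75 84]) (use 7 in simp_all)
  next
    case 8 show ?thesis by (rule decay_certificate[of 234 n 266 616 78 95]) (use 8 in simp_all)
  next
    case 9 show ?thesis by (rule decay_certificate[of 267 n 285 643 80 101]) (use 9 in simp_all)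
  next
    case 10 show ?thesis by (rule decay_certificate[of 286 n 297 658 81 105]) (use 10 in simp_all)
  next
    case 11 show ?thesis by (rule decay_certificate[of 298 n 306 667 82 108]) (use 11 in simp_all)
  next
    case 12 show ?thesis by (rule decay_certificate[of 307 n 307 674 82 109]) (use 12 in simp_all)
  qed
qed

(* Numerics of the chain for n = t^3 and block length d ~ 2t: the value b1 at d, the value b0 at
   0, and finally the value bk at k d, which is below 2t once k is large enough. *)
lemma first_link_bound:
  fixes t d b0 b1 :: real
  assumes t: "0 < t" and d: "2 * t \<le> d"
    and B1: "(d * b1)\<^sup>2 \<le> t ^ 3 * (t ^ 3 * b0 / 3)" and b0: "0 \<le> b0"
  shows "b1\<^sup>2 \<le> t ^ 4 * b0 / 12"
proof -
  have "(2 * t)\<^sup>2 \<le> d\<^sup>2" by (rule power_mono) (use d t in auto)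
  then have "b1\<^sup>2 * (4 * t\<^sup>2) \<le> b1\<^sup>2 * d\<^sup>2" by (intro mult_left_mono) (simp_all add: power_mult_distrib)
  then have "t\<^sup>2 * (12 * b1\<^sup>2) \<le> 3 * (d * b1)\<^sup>2"
    by (simp add: power_mult_distrib algebra_simps)
  also have "\<dots> \<le> t\<^sup>2 * (t ^ 4 * b0)"
    using B1 by (simp add: power_add[symmetric] algebra_simps)
  finally have "t\<^sup>2 * (12 * b1\<^sup>2) \<le> t\<^sup>2 * (t ^ 4 * b0)" .
  then have "12 * b1\<^sup>2 \<le> t ^ 4 * b0" using t by (simp only: mult_le_cancel_left_pos zero_less_power)
  then show ?thesis by simp
qed

(* The value at 0 is at most (131/50) t^4: combining b0 <= b1 + t^3 d with the bound on b1^2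
   leads to a quadratic inequality that fails above this value. *)
lemma origin_bound:
  fixes t d b0 b1 :: real
  assumes t: "27/4 \<le> t" and d: "2 * t \<le> d" "d \<le> 2 * t + 1"
    and B1: "(d * b1)\<^sup>2 \<le> t ^ 3 * (t ^ 3 * b0 / 3)" and B2: "b0 \<le> b1 + t ^ 3 * d"
    and nonneg: "0 \<le> b1" "0 \<le> b0"
  shows "b0 \<le> 131/50 * t ^ 4"
proof (rule ccontr)
  assume "\<not> b0 \<le> 131/50 * t ^ 4"
  define T4 where "T4 = t ^ 4"
  define z where "z = b0 - 58/27 * T4"
  define y0 :: real where "y0 = 637/1350"
  have T4: "0 < T4" using t by (simp add: T4_def)
  have "t ^ 3 * d \<le> t ^ 3 * (2 * t + 1)" using d t by (intro mult_left_mono) auto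
  also have "\<dots> \<le> 58/27 * T4"
    using mult_left_mono[of "27/4" t "t ^ 3"] t by (simp add: T4_def eval_nat_numeral algebra_simps)
  finally have "z \<le> b1" using B2 by (simp add: z_def)
  have z: "y0 * T4 < z" using \<open>\<not> b0 \<le> 131/50 * t ^ 4\<close> by (simp add: z_def y0_def T4_def)
  then have "0 < z" using T4 by (simp add: y0_def)
  have "z\<^sup>2 \<le> b1\<^sup>2" using \<open>z \<le> b1\<close> \<open>0 < z\<close> by (intro power_mono) auto
  also have "\<dots> \<le> T4 * b0 / 12"
    using first_link_bound[OF _ d(1) B1 nonneg(2)] t by (simp add: T4_def)
  also have "\<dots> = T4 * z / 12 + 58/324 * (T4 * T4)" by (simp add: z_def field_simps)
  finally have upper: "z * (z - T4 / 12) \<le> 58/324 * (T4 * T4)"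
    by (simp add: power2_eq_square algebra_simps)
  have "y0 * T4 * (y0 * T4 - T4 / 12) < z * (z - T4 / 12)"
    using z \<open>0 < z\<close> T4 by (intro mult_strict_mono) (simp_all add: y0_def)
  moreover have "58/324 * (T4 * T4) \<le> y0 * T4 * (y0 * T4 - T4 / 12)"
    using T4 by (simp add: y0_def algebra_simps)
  ultimately show False using upper by simp
qed

lemma chain_end_bound:
  fixes t d b0 b1 bk :: real and k :: nat
  assumes t: "27/4 \<le> t" and d: "2 * t \<le> d" "d \<le> 2 * t + 1"
    and B1: "(d * b1)\<^sup>2 \<le> t ^ 3 * (t ^ 3 * b0 / 3)" and B2: "b0 \<le> b1 + t ^ 3 * d"
    and B3: "bk ^ 3 \<le> (t ^ 3 / (3 * d ^ 3)) ^ (k - 1) * (b1\<^sup>2 * b0)"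
    and nonneg: "0 \<le> b1" "0 \<le> b0"
    and long: "17161/2500 * t ^ 9 < 96 * 24 ^ (k - 1)"
  shows "bk < 2 * t"
proof (rule ccontr)
  assume "\<not> bk < 2 * t"
  have tp: "0 < t" using t by simp
  have b0: "b0 \<le> 131/50 * t ^ 4" by (rule origin_bound[OF t d B1 B2 nonneg])
  have "b1\<^sup>2 * b0 \<le> (t ^ 4 * b0 / 12) * b0"
    by (rule mult_right_mono[OF first_link_bound[OF tp d(1) B1 nonneg(2)] nonneg(2)])
  also have "\<dots> \<le> t ^ 4 * (131/50 * t ^ 4)\<^sup>2 / 12"
  proof -
    have "b0 * b0 \<le> (131/50 * t ^ 4) * (131/50 * t ^ 4)" using b0 nonneg by (intro mult_mono) auto
    then have "t ^ 4 * (b0 * b0) \<le> t ^ 4 * ((131/50 * t ^ 4) * (131/50 * t ^ 4))"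
      using tp by (intro mult_left_mono) auto
    then show ?thesis by (simp add: power2_eq_square mult_ac)
  qed
  also have "\<dots> = (131/50)\<^sup>2 * t ^ 12 / 12"
    using power_add[of t 4 8] power_add[of t 4 4] by (simp add: power2_eq_square algebra_simps)
  finally have mass: "b1\<^sup>2 * b0 \<le> (131/50)\<^sup>2 * t ^ 12 / 12" .
  have "(2 * t) ^ 3 \<le> d ^ 3" by (rule power_mono) (use d tp in auto)
  moreover have "0 < d ^ 3" using d(1) tp by simp
  ultimately have "t ^ 3 / (3 * d ^ 3) \<le> 1/24" "0 \<le> t ^ 3 / (3 * d ^ 3)"
    using tp by (simp_all add: field_simps)
  then have "(t ^ 3 / (3 * d ^ 3)) ^ (k - 1) \<le> (1/24) ^ (k - 1)" by (intro power_mono)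
  then have "(t ^ 3 / (3 * d ^ 3)) ^ (k - 1) * (b1\<^sup>2 * b0) \<le> (1/24) ^ (k - 1) * ((131/50)\<^sup>2 * t ^ 12 / 12)"
    by (rule mult_mono[OF _ mass]) (use nonneg in simp_all)
  then have "bk ^ 3 \<le> (1/24) ^ (k - 1) * ((131/50)\<^sup>2 * t ^ 12 / 12)" using B3 by linarith
  moreover have "(2 * t) ^ 3 \<le> bk ^ 3" using \<open>\<not> bk < 2 * t\<close> tp by (intro power_mono) auto
  ultimately have "t ^ 3 * 8 \<le> t ^ 3 * ((131/50)\<^sup>2 * t ^ 9 / (12 * 24 ^ (k - 1)))"
    using power_add[of t 3 9] by (simp add: power_mult_distrib power_one_over mult_ac)
  then have "8 \<le> (131/50)\<^sup>2 * t ^ 9 / (12 * 24 ^ (k - 1))"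
    by (rule mult_left_le_imp_le) (use tp in simp)
  then show False using long by (simp add: field_simps)
qed

lemma chain_count:
  fixes t d L :: real and k :: nat
  assumes t: "27/4 \<le> t" and L: "8 \<le> L" and d: "0 < d" "d \<le> 2 * t + 1"
    and k: "(2 * t * L - 2 * t) / d - 1 < real k"
  shows "27/29 * (L - 1) - 2 < real k - 1"
proof -
  have "2 * t * L - 2 * t - 27/29 * (L - 1) * (2 * t + 1) = (L - 1) * (4 * t - 27) / 29"
    by (simp add: field_simps)
  moreover have "0 \<le> (L - 1) * (4 * t - 27)" using L t by simp
  ultimately have "27/29 * (L - 1) * (2 * t + 1) \<le> 2 * t * L - 2 * t" by simp
  then have "27/29 * (L - 1) \<le> (2 * t * L - 2 * t) / (2 * t + 1)" using t by (simp add: field_simps)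
  also have "\<dots> \<le> (2 * t * L - 2 * t) / d"
    using L t d mult_pos_pos[of d "2 * t + 1"] by (intro divide_left_mono) (simp_all add: algebra_simps)
  finally show ?thesis using k by linarith
qed

lemma chain_length:
  fixes n k :: nat and L :: real
  assumes L: "L = log 2 (real n)" "8 \<le> L" and n: "0 < n"
    and k: "27/29 * (L - 1) - 2 < real k - 1" and k1: "1 \<le> k"
  shows "17161/2500 * real n ^ 3 < 96 * 24 ^ (k - 1)"
proof -
  have c1: "log 2 (17161/2500) \<le> real 28 / real (10::nat)" by (rule log2_upper) (simp_all add: power_divide)
  have c2: "real 658 / real (100::nat) \<le> log 2 96" by (rule log2_lower) simp_all
  have c3: "real 458 / real (100::nat) \<le> log 2 24" by (rule log2_lower) simp_all
  have "log 2 (17161/2500 * real n ^ 3) = log 2 (17161/2500) + log 2 (real n ^ 3)"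
    by (rule log_mult_pos) (use n in auto)
  also have "\<dots> = log 2 (17161/2500) + 3 * L" using n L by (simp add: log_nat_power)
  also have "\<dots> < 658/100 + (real k - 1) * (458/100)" using c1 k L(2) by simp argo
  also have "\<dots> \<le> log 2 96 + real (k - 1) * log 2 24"
    using c2 c3 k1 mult_left_mono[of "458/100" "log 2 24" "real k - 1"] by (simp add: of_nat_diff) argo
  also have "\<dots> = log 2 (96 * 24 ^ (k - 1))" by (simp add: log_mult_pos log_nat_power)
  finally show ?thesis using n by (subst (asm) log_less_cancel_iff) auto
qed

lemma tail_bound_frac:
  assumes ms: "move_sequence N \<mu> a \<delta>" and init: "\<And>s. excess (\<mu> 0) s \<le> L * max 0 (- s)"
    and x: "x < R"
  shows "mass (\<mu> N) {R<..} \<le> relax_seq (ramp L (frac x)) (site (frac x) a) N \<lfloor>x\<rfloor> / (R - x)"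
  using tail_bound[OF ms init, of "frac x" "\<lfloor>x\<rfloor>" R] x by (simp add: frac_def)

(* n <= 4: the lattice process vanishes at a site just below the radius. *)
lemma regime_small:
  assumes ms: "move_sequence n \<mu> a \<delta>" and init: "\<And>s. excess (\<mu> 0) s \<le> real n * max 0 (- s)"
    and n: "2 \<le> n" "n \<le> 4"
  shows "mass (\<mu> n) {2 * real n powr (1/3) * log 2 (real n)<..} < 1"
proof -
  define R where "R = 2 * real n powr (1/3) * log 2 (real n)"
  define x where "x = R - 1/2"
  interpret relaxation "ramp (real n) (frac x)" "site (frac x) a" "real n"
    by (rule relaxation_ramp) simp_all
  have "real n + 1/2 \<le> R" unfolding R_def by (rule radius_small[OF n])
  then have "P n \<lfloor>x\<rfloor> = 0" by (intro P_vanishes) (simp add: x_def le_floor_iff)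
  then have "mass (\<mu> n) {R<..} \<le> 0" using tail_bound_frac[OF ms init, of x R] by (simp add: x_def)
  then show ?thesis by (simp add: R_def)
qed

(* 5 <= n <= 307: exponential decay of the lattice process at the site R - 1. *)
lemma regime_mid:
  assumes ms: "move_sequence n \<mu> a \<delta>" and init: "\<And>s. excess (\<mu> 0) s \<le> real n * max 0 (- s)"
    and n: "5 \<le> n" "n \<le> 307"
  shows "mass (\<mu> n) {2 * real n powr (1/3) * log 2 (real n)<..} < 1"
proof -
  define R where "R = 2 * real n powr (1/3) * log 2 (real n)"
  define x where "x = R - 1"
  interpret relaxation "ramp (real n) (frac x)" "site (frac x) a" "real n"
    by (rule relaxation_ramp) simp_all
  have "real (2 * 100 * 20) / 1000 \<le> R"
    unfolding R_def using n power_mono[of 4 n 10] by (intro radius_lower) auto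
  then have x: "\<lfloor>x\<rfloor> = int (nat \<lfloor>R - 1\<rfloor>)" by (simp add: x_def)
  have "mass (\<mu> n) {R<..} \<le> P n \<lfloor>x\<rfloor>" using tail_bound_frac[OF ms init, of x R] by (simp add: x_def)
  also have "\<dots> \<le> 2 * real n * (5/4) ^ n / 2 ^ nat \<lfloor>R - 1\<rfloor>" unfolding x by (rule decay_bound)
  also have "\<dots> < 1" unfolding R_def by (rule radius_mid[OF n])
  finally show ?thesis by (simp add: R_def)
qed

lemma large_scale:
  assumes n: "308 \<le> n"
  shows "27/4 \<le> real n powr (1/3)" "(real n powr (1/3)) ^ 3 = real n" "8 \<le> log 2 (real n)"
proof -
  have "(27/4) ^ 3 \<le> real n" using n by (simp add: power_divide)
  then show "27/4 \<le> real n powr (1/3)" "(real n powr (1/3)) ^ 3 = real n"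
    by (simp_all only: cbrt_lower[of "27/4"] cbrt_cube of_nat_0_le_iff)
  show "8 \<le> log 2 (real n)" using log2_lower[of "real n" 1 8] n by simp
qed

lemma block_parameters:
  fixes n :: nat and t L :: real
  assumes n: "308 \<le> n" and t_def: "t = real n powr (1/3)" and L_def: "L = log 2 (real n)"
  obtains d k :: nat where "2 * t \<le> real d" "real d \<le> 2 * t + 1" "1 \<le> d" "1 \<le> k"
    "real (k * d) \<le> 2 * t * L - 2 * t" "17161/2500 * t ^ 9 < 96 * 24 ^ (k - 1)"
proof -
  note t = large_scale(1,2)[OF n, folded t_def] and L = large_scale(3)[OF n, folded L_def]
  define d where "d = nat \<lceil>2 * t\<rceil>"
  define k where "k = nat \<lfloor>(2 * t * L - 2 * t) / real d\<rfloor>"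
  have d: "2 * t \<le> real d" "real d \<le> 2 * t + 1" "1 \<le> d"
    using t(1) unfolding d_def by linarith+
  have "2 * t * 7 \<le> 2 * t * (L - 1)" using t(1) L by (intro mult_left_mono) auto
  then have "real d \<le> 2 * t * L - 2 * t"
    using t(1) d by (simp only: right_diff_distrib mult_1_right)
  then have q: "1 \<le> (2 * t * L - 2 * t) / real d" using d by (simp add: le_divide_eq)
  then have "real k = of_int \<lfloor>(2 * t * L - 2 * t) / real d\<rfloor>" unfolding k_def by simp
  then have k: "1 \<le> k" "real k \<le> (2 * t * L - 2 * t) / real d"
      "(2 * t * L - 2 * t) / real d - 1 < real k"
    using q by linarith+
  have "real (k * d) \<le> 2 * t * L - 2 * t" using k(2) d by (simp add: le_divide_eq)
  moreover have "t ^ 9 = real n ^ 3" using power_mult[of t 3 3] t(2) by simp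
  then have "17161/2500 * t ^ 9 < 96 * 24 ^ (k - 1)"
    using chain_length[OF L_def L _ chain_count[OF t(1) L _ d(2) k(3)] k(1)] n d by simp
  ultimately show ?thesis using that d k(1) by blast
qed

(* n >= 308: the cubic decay along the blocks bounds the process at k d by 2t, and the radius
   exceeds k d by at least 2t. *)
lemma regime_large:
  assumes ms: "move_sequence n \<mu> a \<delta>" and init: "\<And>s. excess (\<mu> 0) s \<le> real n * max 0 (- s)"
    and n: "308 \<le> n"
  shows "mass (\<mu> n) {2 * real n powr (1/3) * log 2 (real n)<..} < 1"
proof -
  define t where "t = real n powr (1/3)"
  define L where "L = log 2 (real n)"
  note t = large_scale(1,2)[OF n, folded t_def]
  obtain d k where d: "2 * t \<le> real d" "real d \<le> 2 * t + 1" "1 \<le> d" and k: "1 \<le> k"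
    and kd: "real (k * d) \<le> 2 * t * L - 2 * t" and long: "17161/2500 * t ^ 9 < 96 * 24 ^ (k - 1)"
    using block_parameters[OF n t_def L_def] by blast
  interpret relaxation "ramp (real n) 0" "site 0 a" "real n"
    by (rule relaxation_ramp) simp_all
  have "(real d * P n (int d))\<^sup>2 \<le> t ^ 3 * (t ^ 3 * P n 0 / 3)"
    using chain_step[OF d(3), where N = n and m = 0 and \<Gamma> = "real n"] gap_le t(2) by simp
  moreover have "P n 0 \<le> P n (int d) + t ^ 3 * real d"
    using slope_bound[of n 0 d] t(2) by (simp add: mult.commute)
  moreover have "(P n (int (k * d))) ^ 3
      \<le> (t ^ 3 / (3 * real d ^ 3)) ^ (k - 1) * ((P n (int d))\<^sup>2 * P n 0)"
    using chain_decay[OF d(3) k, of n] t(2) by simp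
  ultimately have "P n (int (k * d)) < 2 * t"
    using chain_end_bound[OF t(1) d(1,2) _ _ _ P_nonneg P_nonneg long] by blast
  then have "P n (int (k * d)) / (2 * t * L - real (k * d)) < 1"
    using kd t(1) by (simp add: divide_less_eq)
  moreover have lt: "real (k * d) < 2 * t * L" using kd t(1) by simp
  have "frac (real (k * d)) = 0" by simp
  then have "mass (\<mu> n) {2 * t * L<..} \<le> P n (int (k * d)) / (2 * t * L - real (k * d))"
    using tail_bound_frac[OF ms init lt] by (simp only: floor_of_nat)
  ultimately have "mass (\<mu> n) {2 * t * L<..} < 1" by linarith
  then show ?thesis by (simp add: t_def L_def)
qed

theorem mainTheorem4:
  fixes n :: nat and \<mu> :: "nat \<Rightarrow> real \<Rightarrow> real" and a :: "nat \<Rightarrow> real"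
    and \<delta> :: "nat \<Rightarrow> real \<Rightarrow> real"
  assumes "n \<ge> 2"
    and "move_sequence n \<mu> a \<delta>"
    and "mass (\<mu> 0) {..0} \<le> real n"
    and "mass (\<mu> 0) {0<..} = 0"
  shows "mass (\<mu> n) {2 * real n powr (1/3) * log 2 (real n) <..} < 1"
proof -
  have init: "\<And>s. excess (\<mu> 0) s \<le> real n * max 0 (- s)"
    using excess_initial[OF _ assms(4,3)] assms(2) by (simp add: move_sequence_def)
  consider "n \<le> 4" | "5 \<le> n \<and> n \<le> 307" | "308 \<le> n" by linarith
  then show ?thesis
    using regime_small[OF assms(2) init assms(1)] regime_mid[OF assms(2) init]
      regime_large[OF assms(2) init]
    by cases auto
qed

end
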